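(* Let $G$ be a graph with vertex set $V$, each vertex carrying a finite-dimensional Hilbert space, let $\alpha$ be a QCA of range $R$, let $F\subseteq V$, and let $\mathcal{P}(\alpha,F)$ be the commutant of $\mathcal{A}(\mathrm{Int}(F))$ in $\alpha(\mathcal{A}(F))$. Then $\mathcal{P}(\alpha,F)$ is a $2R$-visibly simple algebra.
   Context: For a set $S$ of sites, $\mathcal{A}(S)$ is the algebra of operators supported on $S$ (operators on $\bigotimes_{x\in S}\mathcal{H}_x$ tensored with the identity); the support of an operator is the minimal such set (scalars have empty support). A QCA of range $R$ is a $*$-automorphism $\alpha$ of the full operator algebra such that for each site $x$ and each $O$ supported on $\{x\}$, $\alpha(O)$ is supported on sites within graph distance $R$ of $x$. $\mathrm{Int}(F)=\{x: \text{all sites within distance } R \text{ of } x \text{ lie in } F\}$. An algebra $\mathcal{A}$ is $l$-visibly simple if for every $O\in\mathcal{A}$ and every site $x$ in the support of $O$ there is $P\in\mathcal{A}$ supported within distance $l$ of $x$ with $[O,P]\ne0$. *)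

theory Defs
  imports Complex_Main
begin

text \<open>Site x carries the
Hilbert space C^(d x). A basis configuration of the tensor product is a function
s :: 'v => nat with s x < d x on V and s x = 0 off V. Operators on the tensor
product are complex matrices indexed by configurations (zero outside).\<close>

type_synonym 'v op = "('v \<Rightarrow> nat) \<Rightarrow> ('v \<Rightarrow> nat) \<Rightarrow> complex"

definition confs :: "'v set \<Rightarrow> ('v \<Rightarrow> nat) \<Rightarrow> ('v \<Rightarrow> nat) set" where
  "confs V d = {s. (\<forall>x\<in>V. s x < d x) \<and> (\<forall>x. x \<notin> V \<longrightarrow> s x = 0)}"

definition ops :: "'v set \<Rightarrow> ('v \<Rightarrow> nat) \<Rightarrow> 'v op set" where
  "ops V d = {A. \<forall>s t. (s \<notin> confs V d \<or> t \<notin> confs V d) \<longrightarrow> A s t = 0}"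

definition opmult :: "'v set \<Rightarrow> ('v \<Rightarrow> nat) \<Rightarrow> 'v op \<Rightarrow> 'v op \<Rightarrow> 'v op" where
  "opmult V d A B = (\<lambda>s t. \<Sum>u\<in>confs V d. A s u * B u t)"

definition opadd :: "'v op \<Rightarrow> 'v op \<Rightarrow> 'v op" where
  "opadd A B = (\<lambda>s t. A s t + B s t)"

definition opscale :: "complex \<Rightarrow> 'v op \<Rightarrow> 'v op" where
  "opscale c A = (\<lambda>s t. c * A s t)"

definition opadj :: "'v op \<Rightarrow> 'v op" where
  "opadj A = (\<lambda>s t. cnj (A t s))"

definition opid :: "'v set \<Rightarrow> ('v \<Rightarrow> nat) \<Rightarrow> 'v op" where
  "opid V d = (\<lambda>s t. if s \<in> confs V d \<and> s = t then 1 else 0)"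

text \<open>A is supported on S: A = A_S \<otimes> identity on V - S, written out on matrix entries.\<close>
definition supported_on :: "'v set \<Rightarrow> ('v \<Rightarrow> nat) \<Rightarrow> 'v set \<Rightarrow> 'v op \<Rightarrow> bool" where
  "supported_on V d S A \<longleftrightarrow> A \<in> ops V d \<and>
     (\<forall>s\<in>confs V d. \<forall>t\<in>confs V d. (\<exists>x\<in>V - S. s x \<noteq> t x) \<longrightarrow> A s t = 0) \<and>
     (\<forall>s\<in>confs V d. \<forall>t\<in>confs V d. \<forall>s'\<in>confs V d. \<forall>t'\<in>confs V d.
        (\<forall>x\<in>S. s x = s' x \<and> t x = t' x) \<and> (\<forall>x\<in>V - S. s x = t x \<and> s' x = t' x)
        \<longrightarrow> A s t = A s' t')"

definition alg :: "'v set \<Rightarrow> ('v \<Rightarrow> nat) \<Rightarrow> 'v set \<Rightarrow> 'v op set" where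
  "alg V d S = {A. supported_on V d S A}"

definition support :: "'v set \<Rightarrow> ('v \<Rightarrow> nat) \<Rightarrow> 'v op \<Rightarrow> 'v set" where
  "support V d A = \<Inter>{S. S \<subseteq> V \<and> supported_on V d S A}"

definition within_dist :: "'v set \<Rightarrow> ('v \<Rightarrow> 'v \<Rightarrow> bool) \<Rightarrow> nat \<Rightarrow> 'v \<Rightarrow> 'v \<Rightarrow> bool" where
  "within_dist V E r x y \<longleftrightarrow>
     (x, y) \<in> ({(a, b). a \<in> V \<and> b \<in> V \<and> E a b} \<union> Id_on V) ^^ r"

definition ball :: "'v set \<Rightarrow> ('v \<Rightarrow> 'v \<Rightarrow> bool) \<Rightarrow> nat \<Rightarrow> 'v \<Rightarrow> 'v set" where
  "ball V E r x = {y. within_dist V E r x y}"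

definition is_star_automorphism :: "'v set \<Rightarrow> ('v \<Rightarrow> nat) \<Rightarrow> ('v op \<Rightarrow> 'v op) \<Rightarrow> bool" where
  "is_star_automorphism V d \<alpha> \<longleftrightarrow> bij_betw \<alpha> (ops V d) (ops V d) \<and>
     (\<forall>A\<in>ops V d. \<forall>B\<in>ops V d.
        \<alpha> (opadd A B) = opadd (\<alpha> A) (\<alpha> B) \<and>
        \<alpha> (opmult V d A B) = opmult V d (\<alpha> A) (\<alpha> B)) \<and>
     (\<forall>c. \<forall>A\<in>ops V d. \<alpha> (opscale c A) = opscale c (\<alpha> A)) \<and>
     (\<forall>A\<in>ops V d. \<alpha> (opadj A) = opadj (\<alpha> A))"

definition is_QCA :: "'v set \<Rightarrow> ('v \<Rightarrow> nat) \<Rightarrow> ('v \<Rightarrow> 'v \<Rightarrow> bool) \<Rightarrow> nat \<Rightarrow> ('v op \<Rightarrow> 'v op) \<Rightarrow> bool" where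
  "is_QCA V d E R \<alpha> \<longleftrightarrow> is_star_automorphism V d \<alpha> \<and>
     (\<forall>x\<in>V. \<forall>Q. supported_on V d {x} Q \<longrightarrow> supported_on V d (ball V E R x) (\<alpha> Q))"

definition interior_R :: "'v set \<Rightarrow> ('v \<Rightarrow> 'v \<Rightarrow> bool) \<Rightarrow> nat \<Rightarrow> 'v set \<Rightarrow> 'v set" where
  "interior_R V E R F = {x \<in> V. ball V E R x \<subseteq> F}"

definition P_alg :: "'v set \<Rightarrow> ('v \<Rightarrow> nat) \<Rightarrow> ('v \<Rightarrow> 'v \<Rightarrow> bool) \<Rightarrow> nat \<Rightarrow> ('v op \<Rightarrow> 'v op) \<Rightarrow> 'v set \<Rightarrow> 'v op set" where
  "P_alg V d E R \<alpha> F = {Q \<in> \<alpha> ` alg V d F.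
     \<forall>P\<in>alg V d (interior_R V E R F). opmult V d Q P = opmult V d P Q}"

definition star_subalgebra :: "'v set \<Rightarrow> ('v \<Rightarrow> nat) \<Rightarrow> 'v op set \<Rightarrow> bool" where
  "star_subalgebra V d Alg \<longleftrightarrow> Alg \<subseteq> ops V d \<and> opid V d \<in> Alg \<and>
     (\<forall>A\<in>Alg. \<forall>B\<in>Alg. opadd A B \<in> Alg \<and> opmult V d A B \<in> Alg) \<and>
     (\<forall>c. \<forall>A\<in>Alg. opscale c A \<in> Alg) \<and> (\<forall>A\<in>Alg. opadj A \<in> Alg)"

definition visibly_simple :: "'v set \<Rightarrow> ('v \<Rightarrow> nat) \<Rightarrow> ('v \<Rightarrow> 'v \<Rightarrow> bool) \<Rightarrow> nat \<Rightarrow> 'v op set \<Rightarrow> bool" where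
  "visibly_simple V d E l Alg \<longleftrightarrow>
     (\<forall>Q\<in>Alg. \<forall>x\<in>support V d Q. \<exists>P\<in>Alg.
        supported_on V d (ball V E l x) P \<and> opmult V d Q P \<noteq> opmult V d P Q)"

end

theory Submission
  imports Defs
begin

text \<open>The algebra \<open>P(\<alpha>, F)\<close> is the intersection of the star algebra \<open>\<alpha>(A(F))\<close> with the
  commutant of the self-adjoint algebra \<open>A(Int F)\<close>, hence a star algebra.

  For visible simplicity write \<open>Q = \<alpha>(A)\<close> with \<open>A \<in> A(F)\<close> and let \<open>x\<close> lie in the support of
  \<open>Q\<close>. If \<open>A\<close> commuted with all single-site operators at the sites \<open>y \<in> F\<close> within distance
  \<open>R\<close> of \<open>x\<close>, it would act trivially on the \<open>R\<close>-ball around \<open>x\<close>, which contains the support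
  of \<open>\<alpha>\<^sup>-\<^sup>1(P)\<close> for every \<open>P\<close> at \<open>x\<close>; so \<open>Q\<close> would act trivially at \<open>x\<close>. Hence some
  single-site \<open>B\<close> at such a \<open>y\<close> gives \<open>X = \<alpha>(B) \<in> \<alpha>(A(F))\<close>, supported within distance \<open>2R\<close> of
  \<open>x\<close>, not commuting with \<open>Q\<close>. To move \<open>X\<close> into the commutant of \<open>A(Int F)\<close>, expand it along
  the matrix units \<open>e\<^sub>\<kappa>\<^sub>\<mu>\<close> of the factor on \<open>I = Int F\<close> as \<open>X = \<Sum> e\<^sub>\<kappa>\<^sub>\<mu> X\<^sub>\<kappa>\<^sub>\<mu>\<close>, where the
  blocks \<open>X\<^sub>\<kappa>\<^sub>\<mu> = \<Sum>\<^sub>\<sigma> e\<^sub>\<sigma>\<^sub>\<kappa> X e\<^sub>\<mu>\<^sub>\<sigma>\<close> act trivially on \<open>I\<close> and stay supported near \<open>x\<close>. The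
  matrix units on \<open>I\<close> lie in \<open>\<alpha>(A(F))\<close>, because the \<open>R\<close>-ball of a site outside \<open>F\<close> misses
  \<open>I\<close>, so the blocks lie in \<open>P(\<alpha>, F)\<close>. As \<open>Q\<close> commutes with every \<open>e\<^sub>\<kappa>\<^sub>\<mu>\<close> but not with \<open>X\<close>,
  it fails to commute with some block.\<close>

lemma finite_confs:
  assumes "finite V"
  shows "finite (confs V d)"
proof -
  define M where "M = Max (insert 0 (d ` V))"
  have "d x \<le> M" if "x \<in> V" for x
    unfolding M_def using assms that by (intro Max_ge) auto
  then have "confs V d \<subseteq> {f. \<forall>x. (x \<in> V \<longrightarrow> f x \<in> {..<M}) \<and> (x \<notin> V \<longrightarrow> f x = 0)}"
    unfolding confs_def by (auto intro: less_le_trans)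
  moreover have "finite {f. \<forall>x. (x \<in> V \<longrightarrow> f x \<in> {..<M}) \<and> (x \<notin> V \<longrightarrow> f x = (0::nat))}"
    by (rule finite_set_of_finite_funs) (use assms in auto)
  ultimately show ?thesis
    by (rule finite_subset)
qed

lemma confs_eqI:
  assumes "s \<in> confs V d" "t \<in> confs V d" "\<And>x. x \<in> V \<Longrightarrow> s x = t x"
  shows "s = t"
proof
  fix x
  show "s x = t x"
    using assms unfolding confs_def by (cases "x \<in> V") auto
qed

lemma override_on_confs: "s \<in> confs V d \<Longrightarrow> t \<in> confs V d \<Longrightarrow> override_on s t S \<in> confs V d"
  unfolding confs_def override_on_def by auto

lemma confs_subset:
  assumes "T \<subseteq> V" "\<forall>x\<in>V. d x > 0" "\<sigma> \<in> confs T d"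
  shows "\<sigma> \<in> confs V d"
  using assms unfolding confs_def by auto

definition restrict_conf :: "'v set \<Rightarrow> ('v \<Rightarrow> nat) \<Rightarrow> 'v \<Rightarrow> nat" where
  "restrict_conf I s = override_on (\<lambda>_. 0) s I"

lemma restrict_conf_confs: "s \<in> confs V d \<Longrightarrow> I \<subseteq> V \<Longrightarrow> restrict_conf I s \<in> confs I d"
  unfolding restrict_conf_def override_on_def confs_def by auto

lemma restrict_conf_neq:
  assumes "s \<in> confs V d" "I \<subseteq> V" "\<sigma> \<in> confs I d" "\<sigma> \<noteq> restrict_conf I s"
  obtains z where "z \<in> I" "\<sigma> z \<noteq> s z"
  using confs_eqI[OF assms(3) restrict_conf_confs[OF assms(1,2)]] assms(4)
  by (auto simp: restrict_conf_def)

lemma sum_single_nonzero: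
  assumes "finite A" "w \<in> A" "\<And>u. u \<in> A \<Longrightarrow> u \<noteq> w \<Longrightarrow> f u = 0"
  shows "sum f A = f w"
  using sum.mono_neutral_left[of A "{w}" f] assms by auto

definition opsum :: "'i set \<Rightarrow> ('i \<Rightarrow> 'v op) \<Rightarrow> 'v op" where
  "opsum K f = (\<lambda>s t. \<Sum>i\<in>K. f i s t)"

abbreviation op_commute :: "'v set \<Rightarrow> ('v \<Rightarrow> nat) \<Rightarrow> 'v op \<Rightarrow> 'v op \<Rightarrow> bool" where
  "op_commute V d A B \<equiv> opmult V d A B = opmult V d B A"

lemma opsD: "A \<in> ops V d \<Longrightarrow> s \<notin> confs V d \<or> t \<notin> confs V d \<Longrightarrow> A s t = 0"
  unfolding ops_def by blast

lemma opmult_ops: "A \<in> ops V d \<Longrightarrow> B \<in> ops V d \<Longrightarrow> opmult V d A B \<in> ops V d"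
  unfolding ops_def opmult_def by auto

lemma opadd_ops: "A \<in> ops V d \<Longrightarrow> B \<in> ops V d \<Longrightarrow> opadd A B \<in> ops V d"
  unfolding ops_def opadd_def by auto

lemma opscale_ops: "A \<in> ops V d \<Longrightarrow> opscale c A \<in> ops V d"
  unfolding ops_def opscale_def by auto

lemma opadj_ops: "A \<in> ops V d \<Longrightarrow> opadj A \<in> ops V d"
  unfolding ops_def opadj_def by auto

lemma opid_ops: "opid V d \<in> ops V d"
  unfolding ops_def opid_def by auto

lemma opmult_assoc: "opmult V d (opmult V d A B) C = opmult V d A (opmult V d B C)"
  unfolding opmult_def
  by (auto simp: sum_distrib_left sum_distrib_right mult.assoc intro!: ext) (rule sum.swap)

lemma opmult_opid_left:
  assumes "finite V" "A \<in> ops V d"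
  shows "opmult V d (opid V d) A = A"
proof (intro ext)
  fix s t
  show "opmult V d (opid V d) A s t = A s t"
  proof (cases "s \<in> confs V d")
    case True
    have "opmult V d (opid V d) A s t = opid V d s s * A s t"
      unfolding opmult_def
      by (rule sum_single_nonzero[OF finite_confs[OF assms(1)] True]) (auto simp: opid_def)
    then show ?thesis
      using True by (simp add: opid_def)
  qed (use assms(2) in \<open>simp add: opmult_def opid_def opsD\<close>)
qed

lemma opmult_opid_right:
  assumes "finite V" "A \<in> ops V d"
  shows "opmult V d A (opid V d) = A"
proof (intro ext)
  fix s t
  show "opmult V d A (opid V d) s t = A s t"
  proof (cases "t \<in> confs V d")
    case True
    have "opmult V d A (opid V d) s t = A s t * opid V d t t"
      unfolding opmult_def
      by (rule sum_single_nonzero[OF finite_confs[OF assms(1)] True]) (auto simp: opid_def)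
    then show ?thesis
      using True by (simp add: opid_def)
  qed (use assms(2) in \<open>auto simp: opmult_def opid_def opsD intro!: sum.neutral\<close>)
qed

lemma opmult_opsum_right: "opmult V d A (opsum K f) = opsum K (\<lambda>i. opmult V d A (f i))"
  unfolding opmult_def opsum_def by (auto simp: sum_distrib_left intro!: ext) (rule sum.swap)

lemma opmult_opsum_left: "opmult V d (opsum K f) A = opsum K (\<lambda>i. opmult V d (f i) A)"
  unfolding opmult_def opsum_def by (auto simp: sum_distrib_right intro!: ext) (rule sum.swap)

lemma opmult_opadd_right: "opmult V d A (opadd B C) = opadd (opmult V d A B) (opmult V d A C)"
  unfolding opmult_def opadd_def by (auto simp: distrib_left sum.distrib)

lemma opmult_opadd_left: "opmult V d (opadd B C) A = opadd (opmult V d B A) (opmult V d C A)"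
  unfolding opmult_def opadd_def by (auto simp: distrib_right sum.distrib)

lemma opmult_opscale_right: "opmult V d A (opscale c B) = opscale c (opmult V d A B)"
  unfolding opmult_def opscale_def by (auto simp: sum_distrib_left intro!: ext sum.cong)

lemma opmult_opscale_left: "opmult V d (opscale c B) A = opscale c (opmult V d B A)"
  unfolding opmult_def opscale_def by (auto simp: sum_distrib_left intro!: ext sum.cong)

lemma opadj_opmult: "opadj (opmult V d A B) = opmult V d (opadj B) (opadj A)"
  unfolding opmult_def opadj_def by (auto simp: mult.commute intro!: ext)

lemma opadj_opadj: "opadj (opadj A) = A"
  unfolding opadj_def by simp

section \<open>Matrix units\<close>

text \<open>The matrix unit \<open>|\<sigma>\<rangle>\<langle>\<tau>|\<close> on the sites \<open>T\<close>, tensored with the identity on \<open>V - T\<close>;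
  only the restrictions of \<open>\<sigma>\<close> and \<open>\<tau>\<close> to \<open>T\<close> matter.\<close>

definition matrix_unit :: "'v set \<Rightarrow> ('v \<Rightarrow> nat) \<Rightarrow> 'v set \<Rightarrow> ('v \<Rightarrow> nat) \<Rightarrow> ('v \<Rightarrow> nat) \<Rightarrow> 'v op" where
  "matrix_unit V d T \<sigma> \<tau> = (\<lambda>s t. if s \<in> confs V d \<and> t \<in> confs V d \<and>
      (\<forall>x\<in>T. s x = \<sigma> x \<and> t x = \<tau> x) \<and> (\<forall>x\<in>V - T. s x = t x) then 1 else 0)"

lemma opmult_matrix_unit_left:
  assumes "finite V" "\<tau> \<in> confs V d"
  shows "opmult V d (matrix_unit V d T \<sigma> \<tau>) Y s t =
    (if s \<in> confs V d \<and> (\<forall>x\<in>T. s x = \<sigma> x) then Y (override_on s \<tau> T) t else 0)"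
proof (cases "s \<in> confs V d \<and> (\<forall>x\<in>T. s x = \<sigma> x)")
  case True
  let ?w = "override_on s \<tau> T"
  have w: "?w \<in> confs V d"
    using True assms override_on_confs by blast
  have "opmult V d (matrix_unit V d T \<sigma> \<tau>) Y s t = matrix_unit V d T \<sigma> \<tau> s ?w * Y ?w t"
    unfolding opmult_def
  proof (rule sum_single_nonzero[OF finite_confs[OF assms(1)] w])
    fix u assume u: "u \<in> confs V d" "u \<noteq> ?w"
    have "matrix_unit V d T \<sigma> \<tau> s u = 0"
    proof (rule ccontr)
      assume "matrix_unit V d T \<sigma> \<tau> s u \<noteq> 0"
      then have "u = ?w"
        using u(1) w by (intro confs_eqI) (auto simp: matrix_unit_def override_on_def split: if_splits)
      then show False
        using u(2) by simp
    qed
    then show "matrix_unit V d T \<sigma> \<tau> s u * Y u t = 0"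
      by simp
  qed
  also have "matrix_unit V d T \<sigma> \<tau> s ?w = 1"
    using True w by (auto simp: matrix_unit_def)
  finally show ?thesis
    using True by simp
qed (auto simp: opmult_def matrix_unit_def intro!: sum.neutral)

lemma opmult_matrix_unit_right:
  assumes "finite V" "\<sigma> \<in> confs V d"
  shows "opmult V d Y (matrix_unit V d T \<sigma> \<tau>) s t =
    (if t \<in> confs V d \<and> (\<forall>x\<in>T. t x = \<tau> x) then Y s (override_on t \<sigma> T) else 0)"
proof (cases "t \<in> confs V d \<and> (\<forall>x\<in>T. t x = \<tau> x)")
  case True
  let ?w = "override_on t \<sigma> T"
  have w: "?w \<in> confs V d"
    using True assms override_on_confs by blast
  have "opmult V d Y (matrix_unit V d T \<sigma> \<tau>) s t = Y s ?w * matrix_unit V d T \<sigma> \<tau> ?w t"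
    unfolding opmult_def
  proof (rule sum_single_nonzero[OF finite_confs[OF assms(1)] w])
    fix u assume u: "u \<in> confs V d" "u \<noteq> ?w"
    have "matrix_unit V d T \<sigma> \<tau> u t = 0"
    proof (rule ccontr)
      assume "matrix_unit V d T \<sigma> \<tau> u t \<noteq> 0"
      then have "u = ?w"
        using u(1) w by (intro confs_eqI) (auto simp: matrix_unit_def override_on_def split: if_splits)
      then show False
        using u(2) by simp
    qed
    then show "Y s u * matrix_unit V d T \<sigma> \<tau> u t = 0"
      by simp
  qed
  also have "matrix_unit V d T \<sigma> \<tau> ?w t = 1"
    using True w by (auto simp: matrix_unit_def)
  finally show ?thesis
    using True by simp
qed (auto simp: opmult_def matrix_unit_def intro!: sum.neutral)

lemma supported_onI:
  assumes "A \<in> ops V d"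
    and "\<And>s t x. s \<in> confs V d \<Longrightarrow> t \<in> confs V d \<Longrightarrow> x \<in> V \<Longrightarrow> x \<notin> S \<Longrightarrow> s x \<noteq> t x \<Longrightarrow> A s t = 0"
    and "\<And>s t s' t'. s \<in> confs V d \<Longrightarrow> t \<in> confs V d \<Longrightarrow> s' \<in> confs V d \<Longrightarrow> t' \<in> confs V d \<Longrightarrow>
       (\<And>x. x \<in> S \<Longrightarrow> s x = s' x) \<Longrightarrow> (\<And>x. x \<in> S \<Longrightarrow> t x = t' x) \<Longrightarrow>
       (\<And>x. x \<in> V \<Longrightarrow> x \<notin> S \<Longrightarrow> s x = t x) \<Longrightarrow> (\<And>x. x \<in> V \<Longrightarrow> x \<notin> S \<Longrightarrow> s' x = t' x) \<Longrightarrow>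
       A s t = A s' t'"
  shows "supported_on V d S A"
  unfolding supported_on_def using assms by blast

lemma supported_on_ops: "supported_on V d S A \<Longrightarrow> A \<in> ops V d"
  unfolding supported_on_def by blast

lemma supported_on_entry_zero:
  "supported_on V d S A \<Longrightarrow> s \<in> confs V d \<Longrightarrow> t \<in> confs V d \<Longrightarrow> x \<in> V \<Longrightarrow> x \<notin> S \<Longrightarrow>
   s x \<noteq> t x \<Longrightarrow> A s t = 0"
  unfolding supported_on_def by blast

lemma supported_on_entry_eq:
  assumes "supported_on V d S A"
    and "s \<in> confs V d" "t \<in> confs V d" "s' \<in> confs V d" "t' \<in> confs V d"
    and "\<And>x. x \<in> S \<Longrightarrow> s x = s' x" "\<And>x. x \<in> S \<Longrightarrow> t x = t' x"
    and "\<And>x. x \<in> V \<Longrightarrow> x \<notin> S \<Longrightarrow> s x = t x" "\<And>x. x \<in> V \<Longrightarrow> x \<notin> S \<Longrightarrow> s' x = t' x"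
  shows "A s t = A s' t'"
proof -
  have "(\<forall>x\<in>S. s x = s' x \<and> t x = t' x) \<and> (\<forall>x\<in>V - S. s x = t x \<and> s' x = t' x)"
    using assms(6-9) by blast
  then show ?thesis
    using assms(1-5) unfolding supported_on_def by blast
qed

lemma supported_on_V:
  assumes "A \<in> ops V d"
  shows "supported_on V d V A"
proof (rule supported_onI[OF assms])
  fix s t s' t' assume "s \<in> confs V d" "t \<in> confs V d" "s' \<in> confs V d" "t' \<in> confs V d"
    "\<And>x. x \<in> V \<Longrightarrow> s x = s' x" "\<And>x. x \<in> V \<Longrightarrow> t x = t' x"
  then show "A s t = A s' t'"
    using confs_eqI by metis
qed auto

lemma supported_on_mono:
  assumes A: "supported_on V d S A" and "S \<subseteq> S'"
  shows "supported_on V d S' A"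
proof (rule supported_onI[OF supported_on_ops[OF A]])
  fix s t x assume "s \<in> confs V d" "t \<in> confs V d" "x \<in> V" "x \<notin> S'" "s x \<noteq> t x"
  then show "A s t = 0"
    using assms supported_on_entry_zero[OF A] by blast
next
  fix s t s' t' assume a: "s \<in> confs V d" "t \<in> confs V d" "s' \<in> confs V d" "t' \<in> confs V d"
    "\<And>x. x \<in> S' \<Longrightarrow> s x = s' x" "\<And>x. x \<in> S' \<Longrightarrow> t x = t' x"
    "\<And>x. x \<in> V \<Longrightarrow> x \<notin> S' \<Longrightarrow> s x = t x" "\<And>x. x \<in> V \<Longrightarrow> x \<notin> S' \<Longrightarrow> s' x = t' x"
  show "A s t = A s' t'"
  proof (cases "\<exists>x\<in>V. x \<notin> S \<and> s x \<noteq> t x")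
    case True
    then obtain x where x: "x \<in> V" "x \<notin> S" "s x \<noteq> t x"
      by blast
    then have "s' x \<noteq> t' x"
      using a(5-7)[of x] by (cases "x \<in> S'") auto
    then show ?thesis
      using supported_on_entry_zero[OF A] a x by metis
  next
    case False
    then have "s' x = t' x" if "x \<in> V" "x \<notin> S" for x
      using a(5-8)[of x] that by (cases "x \<in> S'") auto
    then show ?thesis
      using False a assms by (intro supported_on_entry_eq[OF A]) auto
  qed
qed

lemma supported_on_Int:
  assumes A1: "supported_on V d S1 A" and A2: "supported_on V d S2 A"
  shows "supported_on V d (S1 \<inter> S2) A"
proof (rule supported_onI[OF supported_on_ops[OF A1]])
  fix s t x assume "s \<in> confs V d" "t \<in> confs V d" "x \<in> V" "x \<notin> S1 \<inter> S2" "s x \<noteq> t x"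
  then show "A s t = 0"
    using supported_on_entry_zero[OF A1] supported_on_entry_zero[OF A2] by blast
next
  fix s t s' t' assume a: "s \<in> confs V d" "t \<in> confs V d" "s' \<in> confs V d" "t' \<in> confs V d"
    "\<And>x. x \<in> S1 \<inter> S2 \<Longrightarrow> s x = s' x" "\<And>x. x \<in> S1 \<inter> S2 \<Longrightarrow> t x = t' x"
    "\<And>x. x \<in> V \<Longrightarrow> x \<notin> S1 \<inter> S2 \<Longrightarrow> s x = t x" "\<And>x. x \<in> V \<Longrightarrow> x \<notin> S1 \<inter> S2 \<Longrightarrow> s' x = t' x"
  \<comment> \<open>pass through the configuration pair agreeing with \<open>(s, t)\<close> on \<open>S1\<close> and with \<open>(s', t')\<close> elsewhere\<close>
  let ?p = "override_on s' s S1" and ?q = "override_on t' t S1"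
  have pq: "?p \<in> confs V d" "?q \<in> confs V d"
    using a by (auto simp: override_on_confs)
  have "A s t = A ?p ?q"
    by (rule supported_on_entry_eq[OF A1 a(1,2) pq]) (use a in auto)
  also have "\<dots> = A s' t'"
    by (rule supported_on_entry_eq[OF A2 pq a(3,4)]) (use a in \<open>auto simp: override_on_def\<close>)
  finally show "A s t = A s' t'" .
qed

lemma matrix_unit_supported:
  assumes "T \<subseteq> V"
  shows "supported_on V d T (matrix_unit V d T \<sigma> \<tau>)"
proof (rule supported_onI)
  show "matrix_unit V d T \<sigma> \<tau> \<in> ops V d"
    unfolding ops_def matrix_unit_def by auto
next
  fix s t :: "_ \<Rightarrow> nat" and x assume "x \<in> V" "x \<notin> T" "s x \<noteq> t x"
  then show "matrix_unit V d T \<sigma> \<tau> s t = 0"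
    unfolding matrix_unit_def by auto
next
  fix s t s' t' assume "s \<in> confs V d" "t \<in> confs V d" "s' \<in> confs V d" "t' \<in> confs V d"
    "\<And>x. x \<in> T \<Longrightarrow> s x = s' x" "\<And>x. x \<in> T \<Longrightarrow> t x = t' x"
    "\<And>x. x \<in> V \<Longrightarrow> x \<notin> T \<Longrightarrow> s x = t x" "\<And>x. x \<in> V \<Longrightarrow> x \<notin> T \<Longrightarrow> s' x = t' x"
  then show "matrix_unit V d T \<sigma> \<tau> s t = matrix_unit V d T \<sigma> \<tau> s' t'"
    unfolding matrix_unit_def by auto
qed

lemma supported_on_opadd:
  assumes A: "supported_on V d S A" and B: "supported_on V d S B"
  shows "supported_on V d S (opadd A B)"
proof (rule supported_onI)
  show "opadd A B \<in> ops V d"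
    using A B supported_on_ops opadd_ops by blast
next
  fix s t x assume "s \<in> confs V d" "t \<in> confs V d" "x \<in> V" "x \<notin> S" "s x \<noteq> t x"
  then show "opadd A B s t = 0"
    using supported_on_entry_zero[OF A] supported_on_entry_zero[OF B] by (simp add: opadd_def)
next
  fix s t s' t' assume a: "s \<in> confs V d" "t \<in> confs V d" "s' \<in> confs V d" "t' \<in> confs V d"
    "\<And>x. x \<in> S \<Longrightarrow> s x = s' x" "\<And>x. x \<in> S \<Longrightarrow> t x = t' x"
    "\<And>x. x \<in> V \<Longrightarrow> x \<notin> S \<Longrightarrow> s x = t x" "\<And>x. x \<in> V \<Longrightarrow> x \<notin> S \<Longrightarrow> s' x = t' x"
  show "opadd A B s t = opadd A B s' t'"
    using supported_on_entry_eq[OF A a] supported_on_entry_eq[OF B a] by (simp add: opadd_def)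
qed

lemma supported_on_opscale:
  assumes A: "supported_on V d S A"
  shows "supported_on V d S (opscale c A)"
proof (rule supported_onI)
  show "opscale c A \<in> ops V d"
    using A supported_on_ops opscale_ops by blast
next
  fix s t x assume "s \<in> confs V d" "t \<in> confs V d" "x \<in> V" "x \<notin> S" "s x \<noteq> t x"
  then show "opscale c A s t = 0"
    using supported_on_entry_zero[OF A] by (simp add: opscale_def)
next
  fix s t s' t' assume a: "s \<in> confs V d" "t \<in> confs V d" "s' \<in> confs V d" "t' \<in> confs V d"
    "\<And>x. x \<in> S \<Longrightarrow> s x = s' x" "\<And>x. x \<in> S \<Longrightarrow> t x = t' x"
    "\<And>x. x \<in> V \<Longrightarrow> x \<notin> S \<Longrightarrow> s x = t x" "\<And>x. x \<in> V \<Longrightarrow> x \<notin> S \<Longrightarrow> s' x = t' x"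
  show "opscale c A s t = opscale c A s' t'"
    using supported_on_entry_eq[OF A a] by (simp add: opscale_def)
qed

lemma supported_on_opadj:
  assumes A: "supported_on V d S A"
  shows "supported_on V d S (opadj A)"
proof (rule supported_onI)
  show "opadj A \<in> ops V d"
    using A supported_on_ops opadj_ops by blast
next
  fix s t x assume "s \<in> confs V d" "t \<in> confs V d" "x \<in> V" "x \<notin> S" "s x \<noteq> t x"
  then show "opadj A s t = 0"
    using supported_on_entry_zero[OF A, of t s x] by (simp add: opadj_def)
next
  fix s t s' t' assume a: "s \<in> confs V d" "t \<in> confs V d" "s' \<in> confs V d" "t' \<in> confs V d"
    "\<And>x. x \<in> S \<Longrightarrow> s x = s' x" "\<And>x. x \<in> S \<Longrightarrow> t x = t' x"
    "\<And>x. x \<in> V \<Longrightarrow> x \<notin> S \<Longrightarrow> s x = t x" "\<And>x. x \<in> V \<Longrightarrow> x \<notin> S \<Longrightarrow> s' x = t' x"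
  have "A t s = A t' s'"
    by (rule supported_on_entry_eq[OF A a(2,1,4,3)]) (use a in auto)
  then show "opadj A s t = opadj A s' t'"
    by (simp add: opadj_def)
qed

lemma supported_on_opid: "supported_on V d S (opid V d)"
proof (rule supported_onI[OF opid_ops])
  fix s t s' t' assume a: "s \<in> confs V d" "t \<in> confs V d" "s' \<in> confs V d" "t' \<in> confs V d"
    "\<And>x. x \<in> S \<Longrightarrow> s x = s' x" "\<And>x. x \<in> S \<Longrightarrow> t x = t' x"
    "\<And>x. x \<in> V \<Longrightarrow> x \<notin> S \<Longrightarrow> s x = t x" "\<And>x. x \<in> V \<Longrightarrow> x \<notin> S \<Longrightarrow> s' x = t' x"
  have "s = t \<longleftrightarrow> s' = t'"
    using confs_eqI[OF a(1,2)] confs_eqI[OF a(3,4)] a(5-8) by metis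
  then show "opid V d s t = opid V d s' t'"
    using a by (simp add: opid_def)
qed (auto simp: opid_def)

section \<open>Commutants of matrix units\<close>

lemma supported_on_compl_if_commutes_matrix_units:
  assumes fin: "finite V" and TV: "T \<subseteq> V" and Y: "Y \<in> ops V d"
    and comm: "\<And>\<sigma> \<tau>. \<sigma> \<in> confs V d \<Longrightarrow> \<tau> \<in> confs V d \<Longrightarrow>
       op_commute V d (matrix_unit V d T \<sigma> \<tau>) Y"
  shows "supported_on V d (V - T) Y"
proof -
  have key: "(if q \<in> confs V d \<and> (\<forall>x\<in>T. q x = \<tau> x) then Y p (override_on q \<sigma> T) else 0) =
             (if p \<in> confs V d \<and> (\<forall>x\<in>T. p x = \<sigma> x) then Y (override_on p \<tau> T) q else 0)"
    if "\<sigma> \<in> confs V d" "\<tau> \<in> confs V d" for p q \<sigma> \<tau>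
    using comm[OF that] opmult_matrix_unit_left[OF fin that(2), of T \<sigma> Y p q]
      opmult_matrix_unit_right[OF fin that(1), of Y T \<tau> p q]
    by metis
  show ?thesis
  proof (rule supported_onI[OF Y])
    fix s t x assume a: "s \<in> confs V d" "t \<in> confs V d" "x \<in> V" "x \<notin> V - T" "s x \<noteq> t x"
    then show "Y s t = 0"
      using key[OF a(2) a(2), of t s] by (auto simp: override_on_def)
  next
    fix s t s' t' assume a: "s \<in> confs V d" "t \<in> confs V d" "s' \<in> confs V d" "t' \<in> confs V d"
      "\<And>x. x \<in> V - T \<Longrightarrow> s x = s' x" "\<And>x. x \<in> V - T \<Longrightarrow> t x = t' x"
      "\<And>x. x \<in> V \<Longrightarrow> x \<notin> V - T \<Longrightarrow> s x = t x" "\<And>x. x \<in> V \<Longrightarrow> x \<notin> V - T \<Longrightarrow> s' x = t' x"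
    have "override_on t' s T = t"
      by (rule confs_eqI[OF override_on_confs[OF a(4,1)] a(2)]) (use a TV in \<open>auto simp: override_on_def\<close>)
    moreover have "override_on s t' T = s'"
      by (rule confs_eqI[OF override_on_confs[OF a(1,4)] a(3)]) (use a TV in \<open>auto simp: override_on_def\<close>)
    ultimately show "Y s t = Y s' t'"
      using key[OF a(1) a(4), of t' s] a by auto
  qed
qed

lemma supported_disjoint_commute:
  assumes fin: "finite V" and dis: "S1 \<inter> S2 = {}"
    and A: "supported_on V d S1 A" and B: "supported_on V d S2 B"
  shows "op_commute V d A B"
proof (intro ext)
  fix s t
  have Ao: "A \<in> ops V d" and Bo: "B \<in> ops V d"
    using A B supported_on_ops by blast+
  show "opmult V d A B s t = opmult V d B A s t"
  proof (cases "s \<in> confs V d \<and> t \<in> confs V d")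
    case False
    then show ?thesis
      using Ao Bo by (auto simp: opmult_def opsD)
  next
    case True
    then have s: "s \<in> confs V d" and t: "t \<in> confs V d"
      by auto
    \<comment> \<open>the only intermediate configurations contributing to \<open>A B\<close> resp. \<open>B A\<close>\<close>
    define w where "w = override_on s t S1"
    define w' where "w' = override_on s t S2"
    have w: "w \<in> confs V d" "w' \<in> confs V d"
      unfolding w_def w'_def using s t override_on_confs by blast+
    have AB: "opmult V d A B s t = A s w * B w t"
      unfolding opmult_def
    proof (rule sum_single_nonzero[OF finite_confs[OF fin] w(1)])
      fix u assume u: "u \<in> confs V d" "u \<noteq> w"
      then obtain x where x: "x \<in> V" "u x \<noteq> w x"
        using confs_eqI[OF u(1) w(1)] by blast
      show "A s u * B u t = 0"
      proof (cases "x \<in> S1")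
        case True
        then have "x \<notin> S2" "u x \<noteq> t x"
          using dis x by (auto simp: w_def)
        then show ?thesis
          using supported_on_entry_zero[OF B u(1) t x(1)] by simp
      next
        case False
        then have "s x \<noteq> u x"
          using x by (auto simp: w_def)
        then show ?thesis
          using supported_on_entry_zero[OF A s u(1) x(1) False] by simp
      qed
    qed
    have BA: "opmult V d B A s t = B s w' * A w' t"
      unfolding opmult_def
    proof (rule sum_single_nonzero[OF finite_confs[OF fin] w(2)])
      fix u assume u: "u \<in> confs V d" "u \<noteq> w'"
      then obtain x where x: "x \<in> V" "u x \<noteq> w' x"
        using confs_eqI[OF u(1) w(2)] by blast
      show "B s u * A u t = 0"
      proof (cases "x \<in> S2")
        case True
        then have "x \<notin> S1" "u x \<noteq> t x"
          using dis x by (auto simp: w'_def)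
        then show ?thesis
          using supported_on_entry_zero[OF A u(1) t x(1)] by simp
      next
        case False
        then have "s x \<noteq> u x"
          using x by (auto simp: w'_def)
        then show ?thesis
          using supported_on_entry_zero[OF B s u(1) x(1) False] by simp
      qed
    qed
    show ?thesis
    proof (cases "\<exists>z\<in>V. z \<notin> S1 \<and> z \<notin> S2 \<and> s z \<noteq> t z")
      case True
      then obtain z where z: "z \<in> V" "z \<notin> S1" "z \<notin> S2" "s z \<noteq> t z"
        by blast
      have "B w t = 0"
        by (rule supported_on_entry_zero[OF B w(1) t z(1) z(3)]) (use z in \<open>simp add: w_def\<close>)
      moreover have "A w' t = 0"
        by (rule supported_on_entry_zero[OF A w(2) t z(1) z(2)]) (use z in \<open>simp add: w'_def\<close>)
      ultimately show ?thesis
        using AB BA by simp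
    next
      case False
      have "A s w = A w' t"
        by (rule supported_on_entry_eq[OF A s w(1) w(2) t])
          (use False dis in \<open>auto simp: w_def w'_def override_on_def\<close>)
      moreover have "B w t = B s w'"
        by (rule supported_on_entry_eq[OF B w(1) t s w(2)])
          (use False dis in \<open>auto simp: w_def w'_def override_on_def\<close>)
      ultimately show ?thesis
        using AB BA by simp
    qed
  qed
qed

text \<open>\<open>A(S)\<close> is the commutant of the matrix units on \<open>V - S\<close>, which makes it closed under
  products.\<close>

lemma supported_on_opmult:
  assumes fin: "finite V" and SV: "S \<subseteq> V"
    and A: "supported_on V d S A" and B: "supported_on V d S B"
  shows "supported_on V d S (opmult V d A B)"
proof -
  have "supported_on V d (V - (V - S)) (opmult V d A B)"
  proof (rule supported_on_compl_if_commutes_matrix_units[OF fin _ opmult_ops])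
    fix \<sigma> \<tau> :: "_ \<Rightarrow> nat"
    let ?e = "matrix_unit V d (V - S) \<sigma> \<tau>"
    have e: "supported_on V d (V - S) ?e"
      by (rule matrix_unit_supported) auto
    have "op_commute V d ?e A" "op_commute V d ?e B"
      by (rule supported_disjoint_commute[OF fin _ e]; use A B in auto)+
    then show "op_commute V d ?e (opmult V d A B)"
      by (metis opmult_assoc)
  qed (use A B supported_on_ops in auto)
  moreover have "V - (V - S) = S"
    using SV by blast
  ultimately show ?thesis
    by simp
qed

lemma supported_on_compl_if_commutes_sites:
  assumes fin: "finite V" and Y: "Y \<in> ops V d" and YsV: "Ys \<subseteq> V"
    and comm: "\<And>y P. y \<in> Ys \<Longrightarrow> supported_on V d {y} P \<Longrightarrow> op_commute V d Y P"
  shows "supported_on V d (V - Ys) Y"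
proof -
  have single: "supported_on V d (V - {y}) Y" if "y \<in> Ys" for y
  proof (rule supported_on_compl_if_commutes_matrix_units[OF fin _ Y])
    show "{y} \<subseteq> V"
      using that YsV by auto
    fix \<sigma> \<tau> :: "_ \<Rightarrow> nat"
    show "op_commute V d (matrix_unit V d {y} \<sigma> \<tau>) Y"
      using comm[OF that matrix_unit_supported] that YsV by auto
  qed
  have "finite Ys"
    using YsV fin finite_subset by blast
  then show ?thesis
    using single
  proof (induction Ys)
    case empty
    then show ?case
      using supported_on_V[OF Y] by simp
  next
    case (insert y Ys)
    have "supported_on V d ((V - Ys) \<inter> (V - {y})) Y"
      using insert by (intro supported_on_Int) auto
    moreover have "(V - Ys) \<inter> (V - {y}) = V - insert y Ys"
      by blast
    ultimately show ?case
      by simp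
  qed
qed

lemma star_aut_ops: "is_star_automorphism V d \<alpha> \<Longrightarrow> A \<in> ops V d \<Longrightarrow> \<alpha> A \<in> ops V d"
  unfolding is_star_automorphism_def by (blast dest: bij_betw_apply)

lemma star_aut_inj:
  "is_star_automorphism V d \<alpha> \<Longrightarrow> A \<in> ops V d \<Longrightarrow> B \<in> ops V d \<Longrightarrow> \<alpha> A = \<alpha> B \<Longrightarrow> A = B"
  unfolding is_star_automorphism_def by (metis bij_betw_imp_inj_on inj_onD)

lemma star_aut_surj:
  assumes "is_star_automorphism V d \<alpha>" "B \<in> ops V d"
  obtains A where "A \<in> ops V d" "\<alpha> A = B"
  using assms unfolding is_star_automorphism_def by (metis bij_betw_imp_surj_on imageE)

lemma star_aut_opmult:
  "is_star_automorphism V d \<alpha> \<Longrightarrow> A \<in> ops V d \<Longrightarrow> B \<in> ops V d \<Longrightarrow>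
   \<alpha> (opmult V d A B) = opmult V d (\<alpha> A) (\<alpha> B)"
  unfolding is_star_automorphism_def by simp

lemma star_aut_commute_iff:
  assumes "is_star_automorphism V d \<alpha>" "A \<in> ops V d" "B \<in> ops V d"
  shows "op_commute V d (\<alpha> A) (\<alpha> B) \<longleftrightarrow> op_commute V d A B"
  using star_aut_opmult[OF assms] star_aut_opmult[OF assms(1,3,2)]
    star_aut_inj[OF assms(1) opmult_ops[OF assms(2,3)] opmult_ops[OF assms(3,2)]]
  by metis

lemma star_aut_opid:
  assumes aut: "is_star_automorphism V d \<alpha>" and fin: "finite V"
  shows "\<alpha> (opid V d) = opid V d"
proof -
  obtain A where A: "A \<in> ops V d" "\<alpha> A = opid V d"
    using star_aut_surj[OF aut opid_ops] .
  have "opid V d = \<alpha> (opmult V d (opid V d) A)"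
    using opmult_opid_left[OF fin A(1)] A by simp
  also have "\<dots> = opmult V d (\<alpha> (opid V d)) (opid V d)"
    using star_aut_opmult[OF aut opid_ops A(1)] A by simp
  also have "\<dots> = \<alpha> (opid V d)"
    by (rule opmult_opid_right[OF fin star_aut_ops[OF aut opid_ops]])
  finally show ?thesis
    by simp
qed

lemma sym_relpow: "sym r \<Longrightarrow> (x, y) \<in> r ^^ n \<Longrightarrow> (y, x) \<in> r ^^ n"
proof (induction n arbitrary: x y)
  case (Suc n)
  from Suc.prems(2) obtain z where "(x, z) \<in> r ^^ n" "(z, y) \<in> r"
    by (rule relpow_Suc_E)
  then show ?case
    using Suc by (intro relpow_Suc_I2) (auto dest: symD)
qed simp

lemma ball_sym:
  assumes "\<forall>a b. E a b \<longrightarrow> E b a" "y \<in> ball V E n x"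
  shows "x \<in> ball V E n y"
proof -
  have "sym ({(a, b). a \<in> V \<and> b \<in> V \<and> E a b} \<union> Id_on V)"
    using assms(1) by (auto intro: symI)
  then show ?thesis
    using assms(2) sym_relpow unfolding ball_def within_dist_def by fastforce
qed

lemma ball_trans: "y \<in> ball V E m x \<Longrightarrow> z \<in> ball V E n y \<Longrightarrow> z \<in> ball V E (m + n) x"
  unfolding ball_def within_dist_def by (auto simp: relpow_add)

text \<open>The preimage of \<open>M\<close> commutes with every single-site operator \<open>P\<close> outside \<open>F'\<close>,
  since \<open>\<alpha>(P)\<close> lives in an \<open>R\<close>-ball disjoint from the support of \<open>M\<close>.\<close>

lemma QCA_preimage_supported:
  assumes fin: "finite V" and qca: "is_QCA V d E R \<alpha>"
    and F'V: "F' \<subseteq> V" and M: "supported_on V d I M"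
    and far: "\<And>y. y \<in> V \<Longrightarrow> y \<notin> F' \<Longrightarrow> ball V E R y \<inter> I = {}"
  obtains W where "supported_on V d F' W" "\<alpha> W = M"
proof -
  have aut: "is_star_automorphism V d \<alpha>"
    using qca unfolding is_QCA_def by blast
  obtain W where W: "W \<in> ops V d" "\<alpha> W = M"
    using star_aut_surj[OF aut supported_on_ops[OF M]] .
  have "supported_on V d (V - (V - F')) W"
  proof (rule supported_on_compl_if_commutes_sites[OF fin W(1)])
    fix y P assume y: "y \<in> V - F'" and P: "supported_on V d {y} P"
    have "supported_on V d (ball V E R y) (\<alpha> P)"
      using qca y P unfolding is_QCA_def by blast
    then have "op_commute V d M (\<alpha> P)"
      using far y by (intro supported_disjoint_commute[OF fin _ M]) auto
    then show "op_commute V d W P"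
      using star_aut_commute_iff[OF aut W(1) supported_on_ops[OF P]] W(2) by simp
  qed auto
  moreover have "V - (V - F') = F'"
    using F'V by blast
  ultimately show ?thesis
    using W(2) that by auto
qed

definition commutant :: "'v set \<Rightarrow> ('v \<Rightarrow> nat) \<Rightarrow> 'v op set \<Rightarrow> 'v op set" where
  "commutant V d S = {Q \<in> ops V d. \<forall>P\<in>S. op_commute V d Q P}"

lemma star_subalgebra_Int:
  "star_subalgebra V d A \<Longrightarrow> star_subalgebra V d B \<Longrightarrow> star_subalgebra V d (A \<inter> B)"
  unfolding star_subalgebra_def by blast

lemma star_subalgebra_alg:
  assumes "finite V" "S \<subseteq> V"
  shows "star_subalgebra V d (alg V d S)"
  unfolding star_subalgebra_def alg_def
proof (intro conjI ballI allI)
  show "{A. supported_on V d S A} \<subseteq> ops V d"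
    using supported_on_ops by blast
qed (simp_all add: supported_on_opid supported_on_opadd supported_on_opmult[OF assms]
    supported_on_opscale supported_on_opadj)

lemma star_subalgebra_commutant:
  assumes fin: "finite V" and S: "S \<subseteq> ops V d" and adj: "\<And>P. P \<in> S \<Longrightarrow> opadj P \<in> S"
  shows "star_subalgebra V d (commutant V d S)"
  unfolding star_subalgebra_def
proof (intro conjI ballI allI)
  show "commutant V d S \<subseteq> ops V d" "opid V d \<in> commutant V d S"
    using S opmult_opid_left[OF fin] opmult_opid_right[OF fin] opid_ops
    unfolding commutant_def by auto
next
  fix A B assume "A \<in> commutant V d S" "B \<in> commutant V d S"
  then show "opadd A B \<in> commutant V d S" "opmult V d A B \<in> commutant V d S"
    unfolding commutant_def
    by (auto simp: opadd_ops opmult_ops opmult_opadd_left opmult_opadd_right)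
      (metis opmult_assoc)
next
  fix c A assume "A \<in> commutant V d S"
  then show "opscale c A \<in> commutant V d S"
    unfolding commutant_def by (auto simp: opscale_ops opmult_opscale_left opmult_opscale_right)
next
  fix A assume A: "A \<in> commutant V d S"
  have "op_commute V d (opadj A) P" if "P \<in> S" for P
  proof -
    have "op_commute V d A (opadj P)"
      using A adj[OF that] unfolding commutant_def by blast
    then have "opadj (opmult V d A (opadj P)) = opadj (opmult V d (opadj P) A)"
      by simp
    then show ?thesis
      by (simp add: opadj_opmult opadj_opadj)
  qed
  then show "opadj A \<in> commutant V d S"
    using A unfolding commutant_def by (auto simp: opadj_ops)
qed

lemma star_subalgebra_image:
  assumes aut: "is_star_automorphism V d \<alpha>" and fin: "finite V" and A: "star_subalgebra V d A"
  shows "star_subalgebra V d (\<alpha> ` A)"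
proof -
  have ops: "A \<subseteq> ops V d"
    using A unfolding star_subalgebra_def by blast
  have hom: "\<alpha> (opadd P Q) = opadd (\<alpha> P) (\<alpha> Q)" "\<alpha> (opmult V d P Q) = opmult V d (\<alpha> P) (\<alpha> Q)"
    "\<alpha> (opscale c P) = opscale c (\<alpha> P)" "\<alpha> (opadj P) = opadj (\<alpha> P)"
    if "P \<in> A" "Q \<in> A" for P Q c
    using aut subsetD[OF ops that(1)] subsetD[OF ops that(2)] unfolding is_star_automorphism_def
    by auto
  show ?thesis
    unfolding star_subalgebra_def
  proof (intro conjI ballI allI)
    show "\<alpha> ` A \<subseteq> ops V d"
      using ops star_aut_ops[OF aut] by blast
    have "opid V d \<in> A"
      using A unfolding star_subalgebra_def by blast
    then show "opid V d \<in> \<alpha> ` A"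
      using star_aut_opid[OF aut fin] by (metis imageI)
  next
    fix P Q assume "P \<in> \<alpha> ` A" "Q \<in> \<alpha> ` A"
    then obtain P' Q' where P': "P' \<in> A" "P = \<alpha> P'" and Q': "Q' \<in> A" "Q = \<alpha> Q'"
      by blast
    have "opadd P' Q' \<in> A" "opmult V d P' Q' \<in> A"
      using A P'(1) Q'(1) unfolding star_subalgebra_def by blast+
    then show "opadd P Q \<in> \<alpha> ` A" "opmult V d P Q \<in> \<alpha> ` A"
      unfolding P'(2) Q'(2) hom(1,2)[OF P'(1) Q'(1), symmetric] by auto
  next
    fix c P assume "P \<in> \<alpha> ` A"
    then obtain P' where P': "P' \<in> A" "P = \<alpha> P'"
      by blast
    have "opscale c P' \<in> A"
      using A P'(1) unfolding star_subalgebra_def by blast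
    then show "opscale c P \<in> \<alpha> ` A"
      unfolding P'(2) hom(3)[OF P'(1) P'(1), symmetric] by (rule imageI)
  next
    fix P assume "P \<in> \<alpha> ` A"
    then obtain P' where P': "P' \<in> A" "P = \<alpha> P'"
      by blast
    have "opadj P' \<in> A"
      using A P'(1) unfolding star_subalgebra_def by blast
    then show "opadj P \<in> \<alpha> ` A"
      unfolding P'(2) hom(4)[OF P'(1) P'(1), symmetric] by (rule imageI)
  qed
qed

lemma star_subalgebra_opsum:
  assumes A: "star_subalgebra V d A" and "finite K" "\<And>i. i \<in> K \<Longrightarrow> f i \<in> A"
  shows "opsum K f \<in> A"
  using assms(2,3)
proof (induction K)
  case empty
  have "opsum {} f = opscale 0 (opid V d)"
    by (simp add: opsum_def opscale_def)
  then show ?case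
    using A unfolding star_subalgebra_def by simp
next
  case (insert i K)
  have "opsum (insert i K) f = opadd (f i) (opsum K f)"
    using insert.hyps by (simp add: opsum_def opadd_def)
  then show ?case
    using insert A unfolding star_subalgebra_def by simp
qed

lemma P_alg_eq:
  assumes "is_star_automorphism V d \<alpha>"
  shows "P_alg V d E R \<alpha> F = \<alpha> ` alg V d F \<inter> commutant V d (alg V d (interior_R V E R F))"
  using star_aut_ops[OF assms] supported_on_ops
  unfolding P_alg_def commutant_def alg_def by blast

lemma star_subalgebra_P_alg:
  assumes fin: "finite V" and aut: "is_star_automorphism V d \<alpha>" and FV: "F \<subseteq> V"
  shows "star_subalgebra V d (P_alg V d E R \<alpha> F)"
  unfolding P_alg_eq[OF aut]
proof (rule star_subalgebra_Int)
  show "star_subalgebra V d (\<alpha> ` alg V d F)"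
    by (rule star_subalgebra_image[OF aut fin star_subalgebra_alg[OF fin FV]])
  show "star_subalgebra V d (commutant V d (alg V d (interior_R V E R F)))"
    using supported_on_ops supported_on_opadj
    by (intro star_subalgebra_commutant[OF fin]) (auto simp: alg_def)
qed

section \<open>Block decomposition along a set of sites\<close>

text \<open>The \<open>(\<kappa>, \<mu>)\<close> block of \<open>X\<close> with respect to the tensor factor on \<open>I\<close>, as an operator
  acting trivially on \<open>I\<close> (see \<open>partial_entry_apply\<close>).\<close>

definition partial_entry :: "'v set \<Rightarrow> ('v \<Rightarrow> nat) \<Rightarrow> 'v set \<Rightarrow> 'v op \<Rightarrow> ('v \<Rightarrow> nat) \<Rightarrow> ('v \<Rightarrow> nat) \<Rightarrow> 'v op" where
  "partial_entry V d I X \<kappa> \<mu> = opsum (confs I d)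
     (\<lambda>\<sigma>. opmult V d (opmult V d (matrix_unit V d I \<sigma> \<kappa>) X) (matrix_unit V d I \<mu> \<sigma>))"

lemma partial_entry_apply:
  assumes fin: "finite V" and IV: "I \<subseteq> V" and dpos: "\<forall>x\<in>V. d x > 0"
    and \<kappa>: "\<kappa> \<in> confs I d" and \<mu>: "\<mu> \<in> confs I d"
  shows "partial_entry V d I X \<kappa> \<mu> s t =
    (if s \<in> confs V d \<and> t \<in> confs V d \<and> (\<forall>x\<in>I. s x = t x)
     then X (override_on s \<kappa> I) (override_on t \<mu> I) else 0)"
proof -
  have "\<kappa> \<in> confs V d" "\<mu> \<in> confs V d"
    using confs_subset[OF IV dpos] \<kappa> \<mu> by blast+
  then have summand: "opmult V d (opmult V d (matrix_unit V d I \<sigma> \<kappa>) X) (matrix_unit V d I \<mu> \<sigma>) s t =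
     (if s \<in> confs V d \<and> t \<in> confs V d \<and> (\<forall>x\<in>I. s x = \<sigma> x) \<and> (\<forall>x\<in>I. t x = \<sigma> x)
      then X (override_on s \<kappa> I) (override_on t \<mu> I) else 0)" for \<sigma>
    by (simp add: opmult_matrix_unit_left[OF fin] opmult_matrix_unit_right[OF fin])
  have fin_I: "finite (confs I d)"
    using finite_confs finite_subset[OF IV fin] by blast
  have "partial_entry V d I X \<kappa> \<mu> s t = (\<Sum>\<sigma>\<in>confs I d.
      opmult V d (opmult V d (matrix_unit V d I \<sigma> \<kappa>) X) (matrix_unit V d I \<mu> \<sigma>) s t)"
    unfolding partial_entry_def opsum_def by simp
  also have "\<dots> = (if s \<in> confs V d \<and> t \<in> confs V d \<and> (\<forall>x\<in>I. s x = t x)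
     then X (override_on s \<kappa> I) (override_on t \<mu> I) else 0)"
  proof (cases "s \<in> confs V d \<and> t \<in> confs V d \<and> (\<forall>x\<in>I. s x = t x)")
    case True
    have s: "restrict_conf I s \<in> confs I d"
      using True IV restrict_conf_confs by blast
    have "(\<Sum>\<sigma>\<in>confs I d.
        opmult V d (opmult V d (matrix_unit V d I \<sigma> \<kappa>) X) (matrix_unit V d I \<mu> \<sigma>) s t) =
      opmult V d (opmult V d (matrix_unit V d I (restrict_conf I s) \<kappa>) X)
        (matrix_unit V d I \<mu> (restrict_conf I s)) s t"
    proof (rule sum_single_nonzero[OF fin_I s])
      fix \<sigma> assume "\<sigma> \<in> confs I d" "\<sigma> \<noteq> restrict_conf I s"
      then obtain z where "z \<in> I" "\<sigma> z \<noteq> s z"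
        using True IV restrict_conf_neq by metis
      then show "opmult V d (opmult V d (matrix_unit V d I \<sigma> \<kappa>) X) (matrix_unit V d I \<mu> \<sigma>) s t = 0"
        using summand[of \<sigma>] by auto
    qed
    then show ?thesis
      using True summand[of "restrict_conf I s"] by (simp add: restrict_conf_def)
  qed (auto simp: summand intro!: sum.neutral)
  finally show ?thesis .
qed

lemma partial_entry_ops:
  assumes "finite V" "I \<subseteq> V" "\<forall>x\<in>V. d x > 0" "\<kappa> \<in> confs I d" "\<mu> \<in> confs I d"
  shows "partial_entry V d I X \<kappa> \<mu> \<in> ops V d"
  unfolding ops_def using partial_entry_apply[OF assms] by auto

lemma partial_entry_supported_compl:
  assumes fin: "finite V" and IV: "I \<subseteq> V" and dpos: "\<forall>x\<in>V. d x > 0"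
    and \<kappa>: "\<kappa> \<in> confs I d" and \<mu>: "\<mu> \<in> confs I d"
  shows "supported_on V d (V - I) (partial_entry V d I X \<kappa> \<mu>)"
proof (rule supported_onI[OF partial_entry_ops[OF assms]])
  fix s t x assume "s \<in> confs V d" "t \<in> confs V d" "x \<in> V" "x \<notin> V - I" "s x \<noteq> t x"
  then show "partial_entry V d I X \<kappa> \<mu> s t = 0"
    using partial_entry_apply[OF assms] by auto
next
  fix s t s' t' assume a: "s \<in> confs V d" "t \<in> confs V d" "s' \<in> confs V d" "t' \<in> confs V d"
    "\<And>x. x \<in> V - I \<Longrightarrow> s x = s' x" "\<And>x. x \<in> V - I \<Longrightarrow> t x = t' x"
    "\<And>x. x \<in> V \<Longrightarrow> x \<notin> V - I \<Longrightarrow> s x = t x" "\<And>x. x \<in> V \<Longrightarrow> x \<notin> V - I \<Longrightarrow> s' x = t' x"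
  have \<kappa>V: "\<kappa> \<in> confs V d" and \<mu>V: "\<mu> \<in> confs V d"
    using confs_subset[OF IV dpos] \<kappa> \<mu> by blast+
  have "override_on s \<kappa> I = override_on s' \<kappa> I"
    by (rule confs_eqI[OF override_on_confs[OF a(1) \<kappa>V] override_on_confs[OF a(3) \<kappa>V]])
      (use a in \<open>auto simp: override_on_def\<close>)
  moreover have "override_on t \<mu> I = override_on t' \<mu> I"
    by (rule confs_eqI[OF override_on_confs[OF a(2) \<mu>V] override_on_confs[OF a(4) \<mu>V]])
      (use a in \<open>auto simp: override_on_def\<close>)
  moreover have "\<forall>x\<in>I. s x = t x" "\<forall>x\<in>I. s' x = t' x"
    using a IV by auto
  ultimately show "partial_entry V d I X \<kappa> \<mu> s t = partial_entry V d I X \<kappa> \<mu> s' t'"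
    using partial_entry_apply[OF assms] a by simp
qed

lemma partial_entry_supported:
  assumes fin: "finite V" and IV: "I \<subseteq> V" and dpos: "\<forall>x\<in>V. d x > 0"
    and \<kappa>: "\<kappa> \<in> confs I d" and \<mu>: "\<mu> \<in> confs I d" and X: "supported_on V d K X"
  shows "supported_on V d K (partial_entry V d I X \<kappa> \<mu>)"
proof (rule supported_onI[OF partial_entry_ops[OF fin IV dpos \<kappa> \<mu>]])
  note entries = partial_entry_apply[OF fin IV dpos \<kappa> \<mu>]
  have \<kappa>V: "\<kappa> \<in> confs V d" and \<mu>V: "\<mu> \<in> confs V d"
    using confs_subset[OF IV dpos] \<kappa> \<mu> by blast+
  fix s t z assume a: "s \<in> confs V d" "t \<in> confs V d" "z \<in> V" "z \<notin> K" "s z \<noteq> t z"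
  show "partial_entry V d I X \<kappa> \<mu> s t = 0"
  proof (cases "z \<in> I")
    case False
    then have "X (override_on s \<kappa> I) (override_on t \<mu> I) = 0"
      using a by (intro supported_on_entry_zero[OF X override_on_confs override_on_confs _ a(4)])
        (auto intro: \<kappa>V \<mu>V)
    then show ?thesis
      using entries by simp
  qed (use entries a in auto)
next
  note entries = partial_entry_apply[OF fin IV dpos \<kappa> \<mu>]
  have \<kappa>V: "\<kappa> \<in> confs V d" and \<mu>V: "\<mu> \<in> confs V d"
    using confs_subset[OF IV dpos] \<kappa> \<mu> by blast+
  fix s t s' t' assume a: "s \<in> confs V d" "t \<in> confs V d" "s' \<in> confs V d" "t' \<in> confs V d"
    "\<And>x. x \<in> K \<Longrightarrow> s x = s' x" "\<And>x. x \<in> K \<Longrightarrow> t x = t' x"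
    "\<And>x. x \<in> V \<Longrightarrow> x \<notin> K \<Longrightarrow> s x = t x" "\<And>x. x \<in> V \<Longrightarrow> x \<notin> K \<Longrightarrow> s' x = t' x"
  have "s x = t x \<longleftrightarrow> s' x = t' x" if "x \<in> I" for x
    using a(5-8)[of x] that IV by (cases "x \<in> K") auto
  then have diag: "(\<forall>x\<in>I. s x = t x) \<longleftrightarrow> (\<forall>x\<in>I. s' x = t' x)"
    by blast
  let ?p = "override_on s \<kappa> I" and ?q = "override_on t \<mu> I"
    and ?p' = "override_on s' \<kappa> I" and ?q' = "override_on t' \<mu> I"
  have m: "?p \<in> confs V d" "?q \<in> confs V d" "?p' \<in> confs V d" "?q' \<in> confs V d"
    using override_on_confs \<kappa>V \<mu>V a by blast+
  have "X ?p ?q = X ?p' ?q'"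
  proof (cases "\<exists>z\<in>I. z \<notin> K \<and> \<kappa> z \<noteq> \<mu> z")
    case True
    then obtain z where z: "z \<in> I" "z \<notin> K" "\<kappa> z \<noteq> \<mu> z"
      by blast
    have zV: "z \<in> V"
      using z IV by blast
    have "X ?p ?q = 0"
      by (rule supported_on_entry_zero[OF X m(1,2) zV z(2)]) (use z in simp)
    moreover have "X ?p' ?q' = 0"
      by (rule supported_on_entry_zero[OF X m(3,4) zV z(2)]) (use z in simp)
    ultimately show ?thesis
      by simp
  next
    case False
    show ?thesis
      by (rule supported_on_entry_eq[OF X m]) (use a False in \<open>auto simp: override_on_def\<close>)
  qed
  then show "partial_entry V d I X \<kappa> \<mu> s t = partial_entry V d I X \<kappa> \<mu> s' t'"
    using entries a(1-4) diag by simp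
qed

lemma opmult_matrix_unit_partial_entry_apply:
  assumes fin: "finite V" and IV: "I \<subseteq> V" and dpos: "\<forall>x\<in>V. d x > 0"
    and \<kappa>: "\<kappa> \<in> confs I d" and \<mu>: "\<mu> \<in> confs I d"
  shows "opmult V d (matrix_unit V d I \<kappa> \<mu>) (partial_entry V d I X \<kappa> \<mu>) s t =
    (if s \<in> confs V d \<and> t \<in> confs V d \<and> (\<forall>x\<in>I. s x = \<kappa> x) \<and> (\<forall>x\<in>I. t x = \<mu> x)
     then X s t else 0)"
proof -
  have \<mu>V: "\<mu> \<in> confs V d"
    using confs_subset[OF IV dpos] \<mu> by blast
  have "override_on (override_on s \<mu> I) \<kappa> I = s" if "\<forall>x\<in>I. s x = \<kappa> x"
    using that by (auto simp: override_on_def)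
  moreover have "override_on t \<mu> I = t" if "\<forall>x\<in>I. t x = \<mu> x"
    using that by (auto simp: override_on_def)
  ultimately show ?thesis
    using override_on_confs[OF _ \<mu>V, of s I]
    by (auto simp: opmult_matrix_unit_left[OF fin \<mu>V] partial_entry_apply[OF assms])
qed

lemma opsum_matrix_unit_partial_entry:
  assumes fin: "finite V" and IV: "I \<subseteq> V" and dpos: "\<forall>x\<in>V. d x > 0" and X: "X \<in> ops V d"
  shows "opsum (confs I d \<times> confs I d)
    (\<lambda>(\<kappa>, \<mu>). opmult V d (matrix_unit V d I \<kappa> \<mu>) (partial_entry V d I X \<kappa> \<mu>)) = X"
    (is "opsum ?K ?g = X")
proof (intro ext)
  fix s t
  note summand = opmult_matrix_unit_partial_entry_apply[OF fin IV dpos]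
  have fin_K: "finite ?K"
    using finite_confs finite_subset[OF IV fin] by blast
  show "opsum ?K ?g s t = X s t"
    unfolding opsum_def
  proof (cases "s \<in> confs V d \<and> t \<in> confs V d")
    case True
    let ?w = "(restrict_conf I s, restrict_conf I t)"
    have w: "?w \<in> ?K"
      using True IV restrict_conf_confs by blast
    have "(\<Sum>p\<in>?K. ?g p s t) = ?g ?w s t"
    proof (rule sum_single_nonzero[OF fin_K w])
      fix p assume p: "p \<in> ?K" "p \<noteq> ?w"
      then obtain \<kappa> \<mu> where \<kappa>\<mu>: "p = (\<kappa>, \<mu>)" "\<kappa> \<in> confs I d" "\<mu> \<in> confs I d"
        by blast
      have "\<kappa> \<noteq> restrict_conf I s \<or> \<mu> \<noteq> restrict_conf I t"
        using p \<kappa>\<mu> by auto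
      then have "(\<exists>z\<in>I. \<kappa> z \<noteq> s z) \<or> (\<exists>z\<in>I. \<mu> z \<noteq> t z)"
        using restrict_conf_neq[of s V d I \<kappa>] restrict_conf_neq[of t V d I \<mu>] True IV \<kappa>\<mu> by metis
      then show "?g p s t = 0"
        using summand[OF \<kappa>\<mu>(2,3)] \<kappa>\<mu>(1) by auto
    qed
    also have "\<dots> = X s t"
      using w True by (simp add: summand restrict_conf_def)
    finally show "(\<Sum>p\<in>?K. ?g p s t) = X s t" .
  next
    case False
    then show "(\<Sum>p\<in>?K. ?g p s t) = X s t"
      using opsD[OF X] by (auto simp: summand intro!: sum.neutral)
  qed
qed

lemma commute_if_commutes_partial_entries:
  assumes fin: "finite V" and IV: "I \<subseteq> V" and dpos: "\<forall>x\<in>V. d x > 0" and X: "X \<in> ops V d"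
    and units: "\<And>\<kappa> \<mu>. \<kappa> \<in> confs I d \<Longrightarrow> \<mu> \<in> confs I d \<Longrightarrow> op_commute V d Q (matrix_unit V d I \<kappa> \<mu>)"
    and blocks: "\<And>\<kappa> \<mu>. \<kappa> \<in> confs I d \<Longrightarrow> \<mu> \<in> confs I d \<Longrightarrow>
      op_commute V d Q (partial_entry V d I X \<kappa> \<mu>)"
  shows "op_commute V d Q X"
proof -
  let ?K = "confs I d \<times> confs I d"
  let ?f = "\<lambda>(\<kappa>, \<mu>). opmult V d (matrix_unit V d I \<kappa> \<mu>) (partial_entry V d I X \<kappa> \<mu>)"
  have "op_commute V d Q (?f p)" if "p \<in> ?K" for p
    using that units blocks by (auto simp: opmult_assoc[symmetric]) (simp add: opmult_assoc)
  then have "opsum ?K (\<lambda>p. opmult V d Q (?f p)) = opsum ?K (\<lambda>p. opmult V d (?f p) Q)"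
    unfolding opsum_def by (auto intro!: sum.cong)
  then have "op_commute V d Q (opsum ?K ?f)"
    by (simp add: opmult_opsum_left opmult_opsum_right)
  then show ?thesis
    unfolding opsum_matrix_unit_partial_entry[OF fin IV dpos X] .
qed

lemma partial_entry_mem:
  assumes fin: "finite V" and IV: "I \<subseteq> V" and A: "star_subalgebra V d A" and X: "X \<in> A"
    and units: "\<And>\<sigma> \<tau>. matrix_unit V d I \<sigma> \<tau> \<in> A"
  shows "partial_entry V d I X \<kappa> \<mu> \<in> A"
  unfolding partial_entry_def
proof (rule star_subalgebra_opsum[OF A])
  show "finite (confs I d)"
    using finite_confs finite_subset[OF IV fin] by blast
  show "opmult V d (opmult V d (matrix_unit V d I \<sigma> \<kappa>) X) (matrix_unit V d I \<mu> \<sigma>) \<in> A" for \<sigma>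
    using A X units unfolding star_subalgebra_def by blast
qed

lemma interior_R_subset: "interior_R V E R F \<subseteq> V"
  unfolding interior_R_def by blast

lemma ball_interior_R_disjoint:
  assumes "\<forall>a b. E a b \<longrightarrow> E b a" "y \<notin> F"
  shows "ball V E R y \<inter> interior_R V E R F = {}"
  using ball_sym[OF assms(1)] assms(2) unfolding interior_R_def by blast

lemma matrix_unit_interior_R_mem:
  assumes fin: "finite V" and sym: "\<forall>a b. E a b \<longrightarrow> E b a" and qca: "is_QCA V d E R \<alpha>"
    and FV: "F \<subseteq> V"
  shows "matrix_unit V d (interior_R V E R F) \<sigma> \<tau> \<in> \<alpha> ` alg V d F"
proof -
  obtain W where "supported_on V d F W" "\<alpha> W = matrix_unit V d (interior_R V E R F) \<sigma> \<tau>"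
    using QCA_preimage_supported[OF fin qca FV matrix_unit_supported[OF interior_R_subset]]
      ball_interior_R_disjoint[OF sym] by blast
  then show ?thesis
    unfolding alg_def by (metis imageI mem_Collect_eq)
qed

lemma partial_entry_interior_R_mem_P_alg:
  assumes fin: "finite V" and sym: "\<forall>a b. E a b \<longrightarrow> E b a" and dpos: "\<forall>x\<in>V. d x > 0"
    and qca: "is_QCA V d E R \<alpha>" and FV: "F \<subseteq> V" and X: "X \<in> \<alpha> ` alg V d F"
    and \<kappa>: "\<kappa> \<in> confs (interior_R V E R F) d" and \<mu>: "\<mu> \<in> confs (interior_R V E R F) d"
  shows "partial_entry V d (interior_R V E R F) X \<kappa> \<mu> \<in> P_alg V d E R \<alpha> F"
proof -
  let ?I = "interior_R V E R F"
  have aut: "is_star_automorphism V d \<alpha>"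
    using qca unfolding is_QCA_def by blast
  have "partial_entry V d ?I X \<kappa> \<mu> \<in> \<alpha> ` alg V d F"
    using star_subalgebra_image[OF aut fin star_subalgebra_alg[OF fin FV]] X
      matrix_unit_interior_R_mem[OF fin sym qca FV]
    by (rule partial_entry_mem[OF fin interior_R_subset])
  moreover have "partial_entry V d ?I X \<kappa> \<mu> \<in> commutant V d (alg V d ?I)"
    using partial_entry_supported_compl[OF fin interior_R_subset dpos \<kappa> \<mu>]
    unfolding commutant_def alg_def
    by (auto intro: supported_on_ops supported_disjoint_commute[OF fin])
  ultimately show ?thesis
    unfolding P_alg_eq[OF aut] by blast
qed

lemma support_not_supported:
  assumes "Q \<in> ops V d" "x \<in> support V d Q"
  shows "x \<in> V" "\<not> supported_on V d (V - {x}) Q"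
  using assms supported_on_V unfolding support_def by blast+

text \<open>A site \<open>x\<close> in the support of \<open>\<alpha>(A)\<close> is seen by a single-site operator within distance
  \<open>R\<close> of \<open>x\<close>: otherwise \<open>A\<close> acts trivially on the \<open>R\<close>-ball around \<open>x\<close>, which contains the
  support of the preimage of every operator at \<open>x\<close>.\<close>

lemma QCA_support_noncommuting_site:
  assumes fin: "finite V" and sym: "\<forall>a b. E a b \<longrightarrow> E b a" and qca: "is_QCA V d E R \<alpha>"
    and A: "supported_on V d F A" and x: "x \<in> V" "\<not> supported_on V d (V - {x}) (\<alpha> A)"
  obtains y B where "y \<in> F" "y \<in> ball V E R x" "supported_on V d {y} B" "\<not> op_commute V d A B"
proof -
  have aut: "is_star_automorphism V d \<alpha>"
    using qca unfolding is_QCA_def by blast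
  have Ao: "A \<in> ops V d"
    using A supported_on_ops by blast
  note found = that
  show ?thesis
  proof (rule ccontr)
    assume no: "\<not> thesis"
    have comm: "op_commute V d A B"
      if "y \<in> F" "y \<in> ball V E R x" "supported_on V d {y} B" for y B
      using found[OF that] no by blast
    have Aloc: "supported_on V d (V - V \<inter> ball V E R x) A"
    proof (rule supported_on_compl_if_commutes_sites[OF fin Ao])
      fix y P assume y: "y \<in> V \<inter> ball V E R x" and P: "supported_on V d {y} P"
      show "op_commute V d A P"
      proof (cases "y \<in> F")
        case False
        then show ?thesis
          by (intro supported_disjoint_commute[OF fin _ A P]) blast
      qed (use comm y P in blast)
    qed blast
    have "supported_on V d (V - {x}) (\<alpha> A)"
    proof (rule supported_on_compl_if_commutes_sites[OF fin star_aut_ops[OF aut Ao]])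
      fix y P assume y: "y \<in> {x}" and P: "supported_on V d {y} P"
      obtain W where W: "supported_on V d (V \<inter> ball V E R x) W" "\<alpha> W = P"
        using QCA_preimage_supported[OF fin qca _ P, of "V \<inter> ball V E R x"] y ball_sym[OF sym]
        by blast
      have "op_commute V d A W"
        by (rule supported_disjoint_commute[OF fin _ Aloc W(1)]) blast
      then show "op_commute V d (\<alpha> A) P"
        using star_aut_commute_iff[OF aut Ao supported_on_ops[OF W(1)]] W(2) by simp
    qed (use x in blast)
    then show False
      using x(2) by blast
  qed
qed

lemma visibly_simple_P_alg:
  assumes fin: "finite V" and sym: "\<forall>a b. E a b \<longrightarrow> E b a" and dpos: "\<forall>x\<in>V. d x > 0"
    and qca: "is_QCA V d E R \<alpha>" and FV: "F \<subseteq> V"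
  shows "visibly_simple V d E (2 * R) (P_alg V d E R \<alpha> F)"
  unfolding visibly_simple_def
proof (intro ballI)
  let ?I = "interior_R V E R F"
  have aut: "is_star_automorphism V d \<alpha>"
    using qca unfolding is_QCA_def by blast
  fix Q x assume Q: "Q \<in> P_alg V d E R \<alpha> F" and x: "x \<in> support V d Q"
  obtain A where A: "supported_on V d F A" "Q = \<alpha> A" and "Q \<in> commutant V d (alg V d ?I)"
    using Q unfolding P_alg_eq[OF aut] alg_def by blast
  then have units: "op_commute V d Q (matrix_unit V d ?I \<kappa> \<mu>)" for \<kappa> \<mu>
    using matrix_unit_supported[OF interior_R_subset] unfolding commutant_def alg_def by blast
  have Ao: "A \<in> ops V d"
    using A supported_on_ops by blast
  note x = support_not_supported[OF star_aut_ops[OF aut Ao] x[unfolded A(2)]]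
  obtain y B where y: "y \<in> F" "y \<in> ball V E R x" and B: "supported_on V d {y} B"
    and AB: "\<not> op_commute V d A B"
    using QCA_support_noncommuting_site[OF fin sym qca A(1) x] .
  have Bo: "B \<in> ops V d"
    using B supported_on_ops by blast
  have "supported_on V d (ball V E R y) (\<alpha> B)"
    using qca y(1) FV B unfolding is_QCA_def by blast
  moreover have "ball V E R y \<subseteq> ball V E (2 * R) x"
    using ball_trans[OF y(2)] by (auto simp: mult_2)
  ultimately have local: "supported_on V d (ball V E (2 * R) x) (\<alpha> B)"
    by (rule supported_on_mono)
  have "\<not> op_commute V d Q (\<alpha> B)"
    using AB star_aut_commute_iff[OF aut Ao Bo] A(2) by simp
  then obtain \<kappa> \<mu> where \<kappa>: "\<kappa> \<in> confs ?I d" and \<mu>: "\<mu> \<in> confs ?I d"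
    and noncomm: "\<not> op_commute V d Q (partial_entry V d ?I (\<alpha> B) \<kappa> \<mu>)"
    using commute_if_commutes_partial_entries[OF fin interior_R_subset dpos star_aut_ops[OF aut Bo] units]
    by blast
  have "\<alpha> B \<in> \<alpha> ` alg V d F"
    using supported_on_mono[OF B] y(1) unfolding alg_def by blast
  then show "\<exists>P\<in>P_alg V d E R \<alpha> F. supported_on V d (ball V E (2 * R) x) P \<and> \<not> op_commute V d Q P"
    using partial_entry_interior_R_mem_P_alg[OF fin sym dpos qca FV _ \<kappa> \<mu>] noncomm
      partial_entry_supported[OF fin interior_R_subset dpos \<kappa> \<mu> local]
    by blast
qed

theorem mainTheorem19:
  fixes V :: "'v set" and d :: "'v \<Rightarrow> nat" and E :: "'v \<Rightarrow> 'v \<Rightarrow> bool"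
    and R :: nat and \<alpha> :: "'v op \<Rightarrow> 'v op" and F :: "'v set"
  assumes "finite V"
    and "\<forall>a b. E a b \<longrightarrow> E b a"
    and "\<forall>x\<in>V. d x > 0"
    and "is_QCA V d E R \<alpha>"
    and "F \<subseteq> V"
  shows "star_subalgebra V d (P_alg V d E R \<alpha> F) \<and>
         visibly_simple V d E (2 * R) (P_alg V d E R \<alpha> F)"
proof
  have "is_star_automorphism V d \<alpha>"
    using assms(4) unfolding is_QCA_def by blast
  then show "star_subalgebra V d (P_alg V d E R \<alpha> F)"
    using assms(1,5) by (intro star_subalgebra_P_alg)
  show "visibly_simple V d E (2 * R) (P_alg V d E R \<alpha> F)"
    using assms by (rule visibly_simple_P_alg)
qed

end
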